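(* Let $\mathbb C$ be a pointed variety of universal algebras, $A$ an algebra in $\mathbb C$, and $X,Y$ subalgebras of $A$. Then (a) $[X,Y]_{\mathbb C,A}\subseteq [X,Y]_{A\mid 1}$. (b) If $A$ is the free algebra in $\mathbb C$ on a set $S$, and $X$ and $Y$ are the subalgebras freely generated by subsets $P$ and $Q$ of $S$ respectively, with $P\cap Q=\emptyset$, then $[X,Y]_{\mathbb C,A}=[X,Y]_{A\mid 1}$.
   Context: In a pointed variety, $0$ denotes the unique constant (whose value is a one-element subalgebra). A term $t(\mathbf w_1,\dots,\mathbf w_k,\mathbf x_1,\dots,\mathbf x_m,\mathbf y_1,\dots,\mathbf y_n)$ of $\mathbb C$, with $\{\mathbf x_1,\dots,\mathbf x_m\}$ and $\{\mathbf y_1,\dots,\mathbf y_n\}$ disjoint sets of variables, is a commutator term in $(\mathbf x_1,\dots,\mathbf x_m)$ and $(\mathbf y_1,\dots,\mathbf y_n)$ if the identities $t(\mathbf w_1,\dots,\mathbf w_k,0,\dots,0,\mathbf y_1,\dots,\mathbf y_n)=0=t(\mathbf w_1,\dots,\mathbf w_k,\mathbf x_1,\dots,\mathbf x_m,0,\dots,0)$ hold in $\mathbb C$. $[X,Y]_{\mathbb C,A}$ is the set of all elements $t_A(w_1,\dots,w_k,x_1,\dots,x_m,y_1,\dots,y_n)$ of $A$ where $t$ is such a commutator term, $w_i\in A$, $x_i\in X$, $y_i\in Y$. $[X,Y]_{A\mid 1}$ is the image under the homomorphism $[1_A,x,y]\colon A+X+Y\to A$ (with $x,y$ the inclusions)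 of the kernel (preimage of $0$) of the homomorphism $\langle[\iota_1,\iota_2,0],[\iota_1,0,\iota_2]\rangle\colon A+X+Y\to (A+X)\times_A(A+Y)$, where $\iota_i$ are coproduct injections and $(A+X)\times_A(A+Y)$ is the pullback of $[1,0]\colon A+X\to A$ and $[1,0]\colon A+Y\to A$. *)

theory Defs
  imports Main
begin

datatype ('f, 'v) trm = Var 'v | App 'f "('f, 'v) trm list"

fun wf_trm :: "('f \<Rightarrow> nat) \<Rightarrow> ('f, 'v) trm \<Rightarrow> bool" where
  "wf_trm ar (Var v) = True"
| "wf_trm ar (App f ts) = (length ts = ar f \<and> list_all (wf_trm ar) ts)"

fun subst :: "('v \<Rightarrow> ('f, 'w) trm) \<Rightarrow> ('f, 'v) trm \<Rightarrow> ('f, 'w) trm" where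
  "subst \<sigma> (Var v) = \<sigma> v"
| "subst \<sigma> (App f ts) = App f (map (subst \<sigma>) ts)"

fun vars :: "('f, 'v) trm \<Rightarrow> 'v set" where
  "vars (Var v) = {v}"
| "vars (App f ts) = \<Union> (set (map vars ts))"

fun eval :: "('f \<Rightarrow> 'a list \<Rightarrow> 'a) \<Rightarrow> ('v \<Rightarrow> 'a) \<Rightarrow> ('f, 'v) trm \<Rightarrow> 'a" where
  "eval F \<alpha> (Var v) = \<alpha> v"
| "eval F \<alpha> (App f ts) = F f (map (eval F \<alpha>) ts)"

definition closed_under :: "('f \<Rightarrow> nat) \<Rightarrow> ('f \<Rightarrow> 'a list \<Rightarrow> 'a) \<Rightarrow> 'a set \<Rightarrow> bool" where
  "closed_under ar F C \<longleftrightarrow> (\<forall>f as. length as = ar f \<and> set as \<subseteq> C \<longrightarrow> F f as \<in> C)"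

definition subalgebra :: "('f \<Rightarrow> nat) \<Rightarrow> ('f \<Rightarrow> 'a list \<Rightarrow> 'a) \<Rightarrow> 'a set \<Rightarrow> 'a set \<Rightarrow> bool" where
  "subalgebra ar F C X \<longleftrightarrow> X \<subseteq> C \<and> closed_under ar F X"

definition generated :: "('f \<Rightarrow> nat) \<Rightarrow> ('f \<Rightarrow> 'a list \<Rightarrow> 'a) \<Rightarrow> 'a set \<Rightarrow> 'a set \<Rightarrow> 'a set" where
  "generated ar F C G = \<Inter> {B. B \<subseteq> C \<and> G \<subseteq> B \<and> closed_under ar F B}"

definition in_variety ::
  "('f \<Rightarrow> nat) \<Rightarrow> (('f, nat) trm \<times> ('f, nat) trm) set \<Rightarrow> 'a set \<Rightarrow> ('f \<Rightarrow> 'a list \<Rightarrow> 'a) \<Rightarrow> bool" where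
  "in_variety ar E C F \<longleftrightarrow> closed_under ar F C \<and>
     (\<forall>(l, r) \<in> E. \<forall>\<alpha>. range \<alpha> \<subseteq> C \<longrightarrow> eval F \<alpha> l = eval F \<alpha> r)"

text \<open>With R = {} this is "s = t holds as an identity in the variety C"; with R the
  diagrams of some algebras it is the congruence defining an algebra presented by
  generators and relations in the variety C (e.g. a coproduct).\<close>
inductive deriv ::
  "('f \<Rightarrow> nat) \<Rightarrow> (('f, nat) trm \<times> ('f, nat) trm) set \<Rightarrow> (('f, 'g) trm \<times> ('f, 'g) trm) set
     \<Rightarrow> ('f, 'g) trm \<Rightarrow> ('f, 'g) trm \<Rightarrow> bool"
  for ar E R where
  refl: "wf_trm ar t \<Longrightarrow> deriv ar E R t t"
| sym: "deriv ar E R s t \<Longrightarrow> deriv ar E R t s"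
| trans: "deriv ar E R s t \<Longrightarrow> deriv ar E R t u \<Longrightarrow> deriv ar E R s u"
| ax: "(l, r) \<in> E \<Longrightarrow> (\<forall>v. wf_trm ar (\<sigma> v)) \<Longrightarrow> deriv ar E R (subst \<sigma> l) (subst \<sigma> r)"
| rel: "(s, t) \<in> R \<Longrightarrow> deriv ar E R s t"
| cong: "length ss = ar f \<Longrightarrow> list_all2 (deriv ar E R) ss ts \<Longrightarrow> deriv ar E R (App f ss) (App f ts)"

text \<open>Pointed variety: identities are well-formed, z is a constant, every constant equals z
  in the variety C, and {z} is a subalgebra (f(z,...,z) = z holds in the variety C).\<close>
definition pointed_variety ::
  "('f \<Rightarrow> nat) \<Rightarrow> (('f, nat) trm \<times> ('f, nat) trm) set \<Rightarrow> 'f \<Rightarrow> bool" where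
  "pointed_variety ar E z \<longleftrightarrow>
     (\<forall>(l, r) \<in> E. wf_trm ar l \<and> wf_trm ar r) \<and>
     ar z = 0 \<and>
     (\<forall>c. ar c = 0 \<longrightarrow> deriv ar E ({} :: (('f, nat) trm \<times> ('f, nat) trm) set) (App c []) (App z [])) \<and>
     (\<forall>f. deriv ar E ({} :: (('f, nat) trm \<times> ('f, nat) trm) set)
            (App f (replicate (ar f) (App z []))) (App z []))"

text \<open>Variables of a commutator term: Inl i = w_i, Inr (Inl i) = x_i, Inr (Inr i) = y_i.\<close>
type_synonym var3 = "nat + nat + nat"

definition kill_x :: "var3 \<Rightarrow> 'f \<Rightarrow> ('f, var3) trm" where
  "kill_x v z = (case v of Inr (Inl _) \<Rightarrow> App z [] | _ \<Rightarrow> Var v)"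

definition kill_y :: "var3 \<Rightarrow> 'f \<Rightarrow> ('f, var3) trm" where
  "kill_y v z = (case v of Inr (Inr _) \<Rightarrow> App z [] | _ \<Rightarrow> Var v)"

definition commutator_term ::
  "('f \<Rightarrow> nat) \<Rightarrow> (('f, nat) trm \<times> ('f, nat) trm) set \<Rightarrow> 'f \<Rightarrow> ('f, var3) trm \<Rightarrow> bool" where
  "commutator_term ar E z t \<longleftrightarrow> wf_trm ar t \<and>
     deriv ar E ({} :: (('f, var3) trm \<times> ('f, var3) trm) set) (subst (\<lambda>v. kill_x v z) t) (App z []) \<and>
     deriv ar E ({} :: (('f, var3) trm \<times> ('f, var3) trm) set) (subst (\<lambda>v. kill_y v z) t) (App z [])"

definition comm_CA ::
  "('f \<Rightarrow> nat) \<Rightarrow> (('f, nat) trm \<times> ('f, nat) trm) set \<Rightarrow> 'f \<Rightarrow> 'a set \<Rightarrow> ('f \<Rightarrow> 'a list \<Rightarrow> 'a)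
     \<Rightarrow> 'a set \<Rightarrow> 'a set \<Rightarrow> 'a set" where
  "comm_CA ar E z C F X Y =
     {eval F \<alpha> t | t \<alpha>. commutator_term ar E z t \<and>
        (\<forall>i. \<alpha> (Inl i) \<in> C \<and> \<alpha> (Inr (Inl i)) \<in> X \<and> \<alpha> (Inr (Inr i)) \<in> Y)}"

definition diagram :: "('f \<Rightarrow> nat) \<Rightarrow> ('f \<Rightarrow> 'a list \<Rightarrow> 'a) \<Rightarrow> 'a set \<Rightarrow> ('a \<Rightarrow> 'g)
     \<Rightarrow> (('f, 'g) trm \<times> ('f, 'g) trm) set" where
  "diagram ar F B g = {(App f (map (\<lambda>b. Var (g b)) bs), Var (g (F f bs))) | f bs.
       length bs = ar f \<and> set bs \<subseteq> B}"

text \<open>A+X (resp. A+Y) is the algebra in the variety C presented by generators A \<uplus> X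
  (type 'a+'a) and the diagrams of A and X.  Elements of A+X+Y are represented by terms over
  generators 'a+'a+'a (the kernel condition and the image under [1,x,y] do not depend on
  the representative, so the congruence of A+X+Y itself need not be mentioned).\<close>
definition rel_AX :: "('f \<Rightarrow> nat) \<Rightarrow> ('f \<Rightarrow> 'a list \<Rightarrow> 'a) \<Rightarrow> 'a set \<Rightarrow> 'a set
     \<Rightarrow> (('f, 'a + 'a) trm \<times> ('f, 'a + 'a) trm) set" where
  "rel_AX ar F C X = diagram ar F C Inl \<union> diagram ar F X Inr"

text \<open>Generator-level description of [\<iota>1,\<iota>2,0] : A+X+Y \<rightarrow> A+X and [\<iota>1,0,\<iota>2] : A+X+Y \<rightarrow> A+Y.\<close>
definition map_AX0 :: "'f \<Rightarrow> 'a + 'a + 'a \<Rightarrow> ('f, 'a + 'a) trm" where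
  "map_AX0 z v = (case v of Inl a \<Rightarrow> Var (Inl a) | Inr (Inl x) \<Rightarrow> Var (Inr x) | Inr (Inr y) \<Rightarrow> App z [])"

definition map_A0Y :: "'f \<Rightarrow> 'a + 'a + 'a \<Rightarrow> ('f, 'a + 'a) trm" where
  "map_A0Y z v = (case v of Inl a \<Rightarrow> Var (Inl a) | Inr (Inl x) \<Rightarrow> App z [] | Inr (Inr y) \<Rightarrow> Var (Inr y))"

text \<open>Generator-level description of [1_A, x, y] : A+X+Y \<rightarrow> A.\<close>
definition fold3 :: "'a + 'a + 'a \<Rightarrow> 'a" where
  "fold3 v = (case v of Inl a \<Rightarrow> a | Inr (Inl x) \<Rightarrow> x | Inr (Inr y) \<Rightarrow> y)"

definition valid_gen3 :: "'a set \<Rightarrow> 'a set \<Rightarrow> 'a set \<Rightarrow> 'a + 'a + 'a \<Rightarrow> bool" where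
  "valid_gen3 C X Y v = (case v of Inl a \<Rightarrow> a \<in> C | Inr (Inl x) \<Rightarrow> x \<in> X | Inr (Inr y) \<Rightarrow> y \<in> Y)"

text \<open>[X,Y]_{A|1}: image under [1_A,x,y] of the kernel of
  \<langle>[\<iota>1,\<iota>2,0],[\<iota>1,0,\<iota>2]\<rangle> : A+X+Y \<rightarrow> (A+X)\<times>_A(A+Y).  An element of A+X+Y is the class
  of a term t over the generators; it lies in the kernel iff its images in A+X and A+Y
  are both 0.\<close>
definition comm_A1 ::
  "('f \<Rightarrow> nat) \<Rightarrow> (('f, nat) trm \<times> ('f, nat) trm) set \<Rightarrow> 'f \<Rightarrow> 'a set \<Rightarrow> ('f \<Rightarrow> 'a list \<Rightarrow> 'a)
     \<Rightarrow> 'a set \<Rightarrow> 'a set \<Rightarrow> 'a set" where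
  "comm_A1 ar E z C F X Y =
     {eval F fold3 t | t. wf_trm ar t \<and> (\<forall>v \<in> vars t. valid_gen3 C X Y v) \<and>
        deriv ar E (rel_AX ar F C X) (subst (map_AX0 z) t) (App z []) \<and>
        deriv ar E (rel_AX ar F C Y) (subst (map_A0Y z) t) (App z [])}"

text \<open>The free algebra in the variety C on the set S: classes of terms over S modulo the identities of the variety C.\<close>
definition tcls :: "('f \<Rightarrow> nat) \<Rightarrow> (('f, nat) trm \<times> ('f, nat) trm) set \<Rightarrow> ('f, 's) trm \<Rightarrow> ('f, 's) trm set" where
  "tcls ar E t = {s. deriv ar E {} t s}"

definition free_carrier :: "('f \<Rightarrow> nat) \<Rightarrow> (('f, nat) trm \<times> ('f, nat) trm) set \<Rightarrow> 's set \<Rightarrow> ('f, 's) trm set set" where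
  "free_carrier ar E S = tcls ar E ` {t. wf_trm ar t \<and> vars t \<subseteq> S}"

definition free_ops :: "('f \<Rightarrow> nat) \<Rightarrow> (('f, nat) trm \<times> ('f, nat) trm) set
     \<Rightarrow> 'f \<Rightarrow> ('f, 's) trm set list \<Rightarrow> ('f, 's) trm set" where
  "free_ops ar E f cs = tcls ar E (App f (map (\<lambda>c. SOME t. wf_trm ar t \<and> c = tcls ar E t) cs))"

definition free_gen :: "('f \<Rightarrow> nat) \<Rightarrow> (('f, nat) trm \<times> ('f, nat) trm) set \<Rightarrow> 's \<Rightarrow> ('f, 's) trm set" where
  "free_gen ar E s = tcls ar E (Var s)"

end

theory Submission
  imports Defs
begin

text \<open>
  For (a): if t(w, x, y) is a commutator term, then t(a, x, y) evaluated in A is the image under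
  [1, x, y] of the element t(a, x, y) of A+X+Y, whose images in A+X and A+Y are t(a, x, 0) and
  t(a, 0, y); these are 0 because the identities defining a commutator term hold in every
  algebra of the variety.

  For (b): when A, X, Y are free on S, P, Q, the coproduct A+X is free on two copies of S.
  Replace each generator of a kernel element t(a, x, y) by a term over S representing it, and
  tag the variables of that term as w-, x- or y-variables according to the generator.  Killing
  the y-variables yields the image of t in A+X, read in the free algebra on the tagged
  variables, hence an identity with value 0; symmetrically for x.  Renaming the finitely many
  variables into nat gives a commutator term, and evaluating it at the free generators
  recovers the original element.
\<close>

lemma subst_subst: "subst \<sigma> (subst \<tau> t) = subst (\<lambda>v. subst \<sigma> (\<tau> v)) t"
  by (induction t) auto

lemma vars_subst: "vars (subst \<sigma> t) = (\<Union>v\<in>vars t. vars (\<sigma> v))"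
  by (induction t) auto

lemma finite_vars: "finite (vars t)"
  by (induction t) auto

lemma wf_subst:
  "wf_trm ar t \<Longrightarrow> \<forall>v\<in>vars t. wf_trm ar (\<sigma> v) \<Longrightarrow> wf_trm ar (subst \<sigma> t)"
  by (induction t) (auto simp: list_all_iff)

lemma subst_cong: "\<forall>v\<in>vars t. \<sigma> v = \<sigma>' v \<Longrightarrow> subst \<sigma> t = subst \<sigma>' t"
  by (induction t) auto

lemma eval_subst: "eval F \<beta> (subst \<sigma> t) = eval F (\<lambda>v. eval F \<beta> (\<sigma> v)) t"
  by (induction t) (auto intro!: arg_cong[where f = "F _"])

lemma eval_cong: "\<forall>v\<in>vars t. \<alpha> v = \<alpha>' v \<Longrightarrow> eval F \<alpha> t = eval F \<alpha>' t"
  by (induction t) (auto intro!: arg_cong[where f = "F _"])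

lemma deriv_subst:
  assumes "deriv ar E R s t" and "\<forall>v. wf_trm ar (\<theta> v)"
    and "\<forall>(l, r)\<in>R. deriv ar E R' (subst \<theta> l) (subst \<theta> r)"
  shows "deriv ar E R' (subst \<theta> s) (subst \<theta> t)"
  using assms(1)
proof (induction rule: deriv.induct)
  case (refl t)
  then show ?case using assms(2) by (auto intro: deriv.refl wf_subst)
next
  case (ax l r \<sigma>)
  have "deriv ar E R' (subst (\<lambda>v. subst \<theta> (\<sigma> v)) l) (subst (\<lambda>v. subst \<theta> (\<sigma> v)) r)"
    using ax assms(2) by (intro deriv.ax) (auto intro: wf_subst)
  then show ?case by (simp add: subst_subst)
next
  case (cong ss f ts)
  then have "list_all2 (deriv ar E R') (map (subst \<theta>) ss) (map (subst \<theta>) ts)"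
    by (auto simp: list_all2_map1 list_all2_map2 elim: list_all2_mono)
  then show ?case using cong(1) by (simp add: deriv.cong)
qed (use assms(3) in \<open>auto intro: deriv.sym deriv.trans\<close>)

lemma deriv_identity_subst:
  "deriv ar E {} s t \<Longrightarrow> \<forall>v. wf_trm ar (\<theta> v) \<Longrightarrow> deriv ar E R (subst \<theta> s) (subst \<theta> t)"
  by (rule deriv_subst) auto

lemma deriv_subst_cong:
  "wf_trm ar t \<Longrightarrow> \<forall>v\<in>vars t. deriv ar E R (\<sigma> v) (\<sigma>' v) \<Longrightarrow>
    deriv ar E R (subst \<sigma> t) (subst \<sigma>' t)"
proof (induction t)
  case (App f ts)
  then have "list_all2 (deriv ar E R) (map (subst \<sigma>) ts) (map (subst \<sigma>') ts)"
    by (auto simp: list_all_iff list_all2_conv_all_nth)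
  then show ?case using App.prems by (simp add: deriv.cong)
qed simp

lemma deriv_subst_zero:
  fixes ar :: "'f \<Rightarrow> nat"
  assumes pointed: "pointed_variety ar E z" and "wf_trm ar u"
  shows "deriv ar E R (subst (\<lambda>_. App z []) u) (App z [])"
  using assms(2)
proof (induction u)
  case (Var x)
  show ?case using pointed by (simp add: pointed_variety_def deriv.refl)
next
  case (App f ts)
  have "list_all2 (deriv ar E R) (map (subst (\<lambda>_. App z [])) ts) (replicate (ar f) (App z []))"
    using App by (auto simp: list_all_iff list_all2_conv_all_nth)
  then have args:
    "deriv ar E R (subst (\<lambda>_. App z []) (App f ts)) (App f (replicate (ar f) (App z [])))"
    using App.prems by (auto intro: deriv.cong)
  have "deriv ar E {} (App f (replicate (ar f) (App z []))) (App z [] :: ('f, nat) trm)"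
    using pointed by (simp add: pointed_variety_def)
  from deriv_identity_subst[OF this, of "\<lambda>_. App z []" R]
  have "deriv ar E R (App f (replicate (ar f) (App z []))) (App z [])"
    using pointed by (simp add: pointed_variety_def)
  with args show ?case by (rule deriv.trans)
qed

section \<open>Commutator terms yield elements of the kernel\<close>

lemma sum3_cases:
  obtains (W) a where "v = Inl a" | (X) x where "v = Inr (Inl x)" | (Y) y where "v = Inr (Inr y)"
  by (metis sumE)

fun sel3 :: "'b + 'b + 'b \<Rightarrow> 'c \<Rightarrow> 'c \<Rightarrow> 'c \<Rightarrow> 'c" where
  "sel3 (Inl _) a x y = a"
| "sel3 (Inr (Inl _)) a x y = x"
| "sel3 (Inr (Inr _)) a x y = y"

fun retag :: "'b + 'b + 'b \<Rightarrow> 'c \<Rightarrow> 'c + 'c + 'c" where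
  "retag (Inl _) c = Inl c"
| "retag (Inr (Inl _)) c = Inr (Inl c)"
| "retag (Inr (Inr _)) c = Inr (Inr c)"

lemma fold3_retag [simp]: "fold3 (retag v c) = c"
  by (cases v rule: sum3_cases) (simp_all add: fold3_def)

lemma sel3_retag [simp]: "sel3 (retag v c) a x y = sel3 v a x y"
  by (cases v rule: sum3_cases) auto

lemma comm_CA_subset_comm_A1:
  assumes pointed: "pointed_variety ar E z"
  shows "comm_CA ar E z C F X Y \<subseteq> comm_A1 ar E z C F X Y"
proof
  fix c assume "c \<in> comm_CA ar E z C F X Y"
  then obtain t \<alpha> where c: "c = eval F \<alpha> t" and ct: "commutator_term ar E z t"
    and \<alpha>: "\<forall>i. \<alpha> (Inl i) \<in> C \<and> \<alpha> (Inr (Inl i)) \<in> X \<and> \<alpha> (Inr (Inr i)) \<in> Y"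
    unfolding comm_CA_def by blast
  have z0: "ar z = 0" using pointed by (simp add: pointed_variety_def)
  define g where "g v = retag v (\<alpha> v)" for v
  define t0 where "t0 = subst (\<lambda>v. Var (g v)) t"
  have wf: "wf_trm ar t0"
    using ct unfolding t0_def commutator_term_def by (auto intro: wf_subst)
  have "valid_gen3 C X Y (g v)" for v
    using \<alpha> by (cases v rule: sum3_cases) (auto simp: g_def valid_gen3_def)
  then have valid: "\<forall>v\<in>vars t0. valid_gen3 C X Y v"
    unfolding t0_def vars_subst by auto
  have wf_map: "\<forall>v. wf_trm ar (map_AX0 z (g v))" "\<forall>v. wf_trm ar (map_A0Y z (g v))"
    using z0 by (auto simp: map_AX0_def map_A0Y_def split: sum.splits)
  have ky: "deriv ar E {} (subst (\<lambda>v. kill_y v z) t) (App z [])"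
    and kx: "deriv ar E {} (subst (\<lambda>v. kill_x v z) t) (App z [])"
    using ct by (simp_all add: commutator_term_def)
  have "subst (map_AX0 z) t0 = subst (\<lambda>v. map_AX0 z (g v)) (subst (\<lambda>v. kill_y v z) t)"
    unfolding t0_def subst_subst
    by (rule subst_cong) (auto simp: kill_y_def map_AX0_def g_def split: sum.splits)
  with deriv_identity_subst[OF ky wf_map(1)]
  have "deriv ar E (rel_AX ar F C X) (subst (map_AX0 z) t0) (App z [])"
    by simp
  moreover have "subst (map_A0Y z) t0 = subst (\<lambda>v. map_A0Y z (g v)) (subst (\<lambda>v. kill_x v z) t)"
    unfolding t0_def subst_subst
    by (rule subst_cong) (auto simp: kill_x_def map_A0Y_def g_def split: sum.splits)
  with deriv_identity_subst[OF kx wf_map(2)]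
  have "deriv ar E (rel_AX ar F C Y) (subst (map_A0Y z) t0) (App z [])"
    by simp
  moreover have "eval F fold3 t0 = c"
    unfolding t0_def c by (simp add: eval_subst g_def)
  ultimately show "c \<in> comm_A1 ar E z C F X Y"
    unfolding comm_A1_def using wf valid by blast
qed

section \<open>Free algebras\<close>

lemma tcls_eqI: "deriv ar E {} s t \<Longrightarrow> tcls ar E s = tcls ar E t"
  unfolding tcls_def by (auto intro: deriv.sym deriv.trans)

lemma tcls_eqD: "wf_trm ar t \<Longrightarrow> tcls ar E s = tcls ar E t \<Longrightarrow> deriv ar E {} s t"
  unfolding tcls_def by (metis (mono_tags) deriv.refl mem_Collect_eq)

lemma free_ops_tcls:
  fixes us :: "('f, 's) trm list"
  assumes "length us = ar f" and "list_all (wf_trm ar) us"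
  shows "free_ops ar E f (map (tcls ar E) us) = tcls ar E (App f us)"
proof -
  define ch :: "('f, 's) trm set \<Rightarrow> ('f, 's) trm"
    where "ch c = (SOME t. wf_trm ar t \<and> c = tcls ar E t)" for c
  have "wf_trm ar (ch (tcls ar E u)) \<and> tcls ar E u = tcls ar E (ch (tcls ar E u))"
    if "wf_trm ar u" for u
    unfolding ch_def by (rule someI_ex) (use that in blast)
  then have "deriv ar E {} (ch (tcls ar E u)) u" if "wf_trm ar u" for u
    using that tcls_eqD by metis
  then have "list_all2 (deriv ar E {}) (map (\<lambda>u. ch (tcls ar E u)) us) us"
    using assms(2) by (auto simp: list_all_iff list_all2_conv_all_nth)
  then have "deriv ar E {} (App f (map (\<lambda>u. ch (tcls ar E u)) us)) (App f us)"
    using assms(1) by (intro deriv.cong) auto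
  then show ?thesis
    unfolding free_ops_def ch_def[symmetric] by (simp add: o_def tcls_eqI)
qed

lemma eval_free_ops:
  "wf_trm ar u \<Longrightarrow> \<forall>s\<in>vars u. \<beta> s = free_gen ar E s \<Longrightarrow>
    eval (free_ops ar E) \<beta> u = tcls ar E u"
proof (induction u)
  case (App f ts)
  then have args: "map (eval (free_ops ar E) \<beta>) ts = map (tcls ar E) ts"
    by (auto simp: list_all_iff)
  show ?case
    unfolding eval.simps args using App.prems by (simp add: free_ops_tcls)
qed (simp add: free_gen_def)

lemma free_gen_in_free_carrier: "s \<in> P \<Longrightarrow> free_gen ar E s \<in> free_carrier ar E P"
  unfolding free_carrier_def free_gen_def by force

lemma const_in_free_carrier: "ar c = 0 \<Longrightarrow> tcls ar E (App c []) \<in> free_carrier ar E P"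
  unfolding free_carrier_def by force

text \<open>
  Outside free_carrier P the representative is just some well-formed term; being well-formed
  everywhere makes substitutions built from free_rep admissible in deriv_subst.
\<close>
definition free_rep :: "('f \<Rightarrow> nat) \<Rightarrow> (('f, nat) trm \<times> ('f, nat) trm) set \<Rightarrow> 's set
    \<Rightarrow> ('f, 's) trm set \<Rightarrow> ('f, 's) trm" where
  "free_rep ar E P a =
    (SOME u. wf_trm ar u \<and> (a \<in> free_carrier ar E P \<longrightarrow> vars u \<subseteq> P \<and> tcls ar E u = a))"

lemma free_rep_spec:
  "wf_trm ar (free_rep ar E P a) \<and>
    (a \<in> free_carrier ar E P \<longrightarrow>
      vars (free_rep ar E P a) \<subseteq> P \<and> tcls ar E (free_rep ar E P a) = a)"
proof -
  have "\<exists>u. wf_trm ar u \<and> (a \<in> free_carrier ar E P \<longrightarrow> vars u \<subseteq> P \<and> tcls ar E u = a)"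
  proof (cases "a \<in> free_carrier ar E P")
    case False
    then show ?thesis by (metis wf_trm.simps(1))
  qed (auto simp: free_carrier_def)
  then show ?thesis unfolding free_rep_def by (rule someI_ex)
qed

lemma wf_free_rep: "wf_trm ar (free_rep ar E P a)"
  using free_rep_spec by blast

lemma free_rep_in_carrier:
  "a \<in> free_carrier ar E P \<Longrightarrow>
    vars (free_rep ar E P a) \<subseteq> P \<and> tcls ar E (free_rep ar E P a) = a"
  using free_rep_spec by blast

lemma map_tcls_free_rep:
  "set as \<subseteq> free_carrier ar E P \<Longrightarrow> map (tcls ar E) (map (free_rep ar E P) as) = as"
  unfolding map_map by (rule map_idI) (auto dest: free_rep_in_carrier)

lemma free_ops_free_rep:
  assumes "length as = ar f" and "set as \<subseteq> free_carrier ar E P"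
  shows "free_ops ar E f as = tcls ar E (App f (map (free_rep ar E P) as))"
  by (subst (1) map_tcls_free_rep[OF assms(2), symmetric])
    (rule free_ops_tcls, use assms(1) in \<open>auto simp: list_all_iff wf_free_rep\<close>)

lemma closed_free_carrier: "closed_under ar (free_ops ar E) (free_carrier ar E P)"
  unfolding closed_under_def
proof (intro allI impI)
  fix f as assume as: "length as = ar f \<and> set as \<subseteq> free_carrier ar E P"
  have "wf_trm ar (App f (map (free_rep ar E P) as))"
    using as by (simp add: list_all_iff wf_free_rep)
  moreover have "\<forall>a\<in>set as. vars (free_rep ar E P a) \<subseteq> P"
    using as free_rep_in_carrier by blast
  then have "vars (App f (map (free_rep ar E P) as)) \<subseteq> P"
    by auto
  ultimately show "free_ops ar E f as \<in> free_carrier ar E P"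
    using free_ops_free_rep[of as ar f E P] as unfolding free_carrier_def by blast
qed

lemma generated_free_gen:
  assumes "P \<subseteq> S"
  shows "generated ar (free_ops ar E) (free_carrier ar E S) (free_gen ar E ` P) =
    free_carrier ar E P"
proof
  have "free_carrier ar E P \<subseteq> free_carrier ar E S"
    unfolding free_carrier_def using assms by (intro image_mono) blast
  moreover have "free_gen ar E ` P \<subseteq> free_carrier ar E P"
    by (simp add: image_subset_iff free_gen_in_free_carrier)
  ultimately show "generated ar (free_ops ar E) (free_carrier ar E S) (free_gen ar E ` P)
      \<subseteq> free_carrier ar E P"
    unfolding generated_def using closed_free_carrier[of ar E P] by (intro Inter_lower) simp
next
  have "tcls ar E u \<in> B"
    if closed: "closed_under ar (free_ops ar E) B" and gens: "free_gen ar E ` P \<subseteq> B"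
      and "wf_trm ar u" "vars u \<subseteq> P" for B u
    using that(3,4)
  proof (induction u)
    case (Var s)
    then show ?case using gens by (auto simp: free_gen_def)
  next
    case (App f ts)
    then have "set (map (tcls ar E) ts) \<subseteq> B" "length (map (tcls ar E) ts) = ar f"
      by (auto simp: list_all_iff)
    then have "free_ops ar E f (map (tcls ar E) ts) \<in> B"
      using closed unfolding closed_under_def by blast
    then show ?case
      using App.prems free_ops_tcls[of ts ar f E] by simp
  qed
  then show "free_carrier ar E P
      \<subseteq> generated ar (free_ops ar E) (free_carrier ar E S) (free_gen ar E ` P)"
    unfolding generated_def free_carrier_def by auto
qed

section \<open>Kernel elements of coproducts of free algebras\<close>

lemma deriv_free_diagram:
  assumes "(l, r) \<in> diagram ar (free_ops ar E) (free_carrier ar E P) g"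
    and "\<forall>b. \<theta> (g b) = subst \<rho> (free_rep ar E P b)" and "\<forall>s. wf_trm ar (\<rho> s)"
  shows "deriv ar E R (subst \<theta> l) (subst \<theta> r)"
proof -
  obtain f bs where l: "l = App f (map (\<lambda>b. Var (g b)) bs)"
    and r: "r = Var (g (free_ops ar E f bs))"
    and bs: "length bs = ar f" "set bs \<subseteq> free_carrier ar E P"
    using assms(1) unfolding diagram_def by blast
  have "free_ops ar E f bs \<in> free_carrier ar E P"
    using closed_free_carrier[of ar E P] bs unfolding closed_under_def by blast
  then have "tcls ar E (App f (map (free_rep ar E P) bs))
      = tcls ar E (free_rep ar E P (free_ops ar E f bs))"
    using free_ops_free_rep[OF bs] free_rep_in_carrier by metis
  then have "deriv ar E {}
      (App f (map (free_rep ar E P) bs)) (free_rep ar E P (free_ops ar E f bs))"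
    by (intro tcls_eqD wf_free_rep)
  from deriv_identity_subst[OF this assms(3), of R]
  show ?thesis using assms(2) l r by (simp add: o_def)
qed

text \<open>F(S) + F(S') is free on two copies of S: its presentation maps into terms over them.\<close>
lemma deriv_free_presentation:
  assumes "deriv ar E (rel_AX ar (free_ops ar E) (free_carrier ar E S) (free_carrier ar E S')) u v"
    and "\<forall>s. wf_trm ar (\<rho> s)" and "\<forall>s. wf_trm ar (\<rho>' s)"
  defines "\<theta> \<equiv>
    case_sum (\<lambda>a. subst \<rho> (free_rep ar E S a)) (\<lambda>b. subst \<rho>' (free_rep ar E S' b))"
  shows "deriv ar E R (subst \<theta> u) (subst \<theta> v)"
proof (rule deriv_subst[OF assms(1)])
  show "\<forall>g. wf_trm ar (\<theta> g)"
    using assms(2,3) by (auto simp: \<theta>_def wf_free_rep intro!: wf_subst split: sum.split)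
  show "\<forall>(l, r)\<in>rel_AX ar (free_ops ar E) (free_carrier ar E S) (free_carrier ar E S').
      deriv ar E R (subst \<theta> l) (subst \<theta> r)"
    unfolding rel_AX_def using assms(2,3)
    by (auto simp: \<theta>_def intro: deriv_free_diagram)
qed

lemma valid_gen3_free:
  "valid_gen3 (free_carrier ar E S) (free_carrier ar E P) (free_carrier ar E Q) g \<longleftrightarrow>
    fold3 g \<in> free_carrier ar E (sel3 g S P Q)"
  by (cases g rule: sum3_cases) (simp_all add: valid_gen3_def fold3_def)

definition lift_gen ::
  "('f \<Rightarrow> nat) \<Rightarrow> (('f, nat) trm \<times> ('f, nat) trm) set \<Rightarrow> 's set \<Rightarrow> 's set \<Rightarrow> 's set \<Rightarrow>
    ('s \<Rightarrow> 'b) \<Rightarrow> ('f, 's) trm set + ('f, 's) trm set + ('f, 's) trm set \<Rightarrow> ('f, 'b + 'b + 'b) trm"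
  where "lift_gen ar E S P Q e g =
    subst (\<lambda>s. Var (retag g (e s))) (free_rep ar E (sel3 g S P Q) (fold3 g))"

lemma wf_lift_gen: "wf_trm ar (lift_gen ar E S P Q e g)"
  unfolding lift_gen_def by (simp add: wf_subst wf_free_rep)

lemma deriv_zero_of_free_kernel:
  assumes kernel: "deriv ar E (rel_AX ar (free_ops ar E) (free_carrier ar E S) (free_carrier ar E S'))
      (subst \<pi> t) (App z [])"
    and wf: "wf_trm ar t" and "\<forall>s. wf_trm ar (\<rho> s)" and "\<forall>s. wf_trm ar (\<rho>' s)"
    and pointwise: "\<And>g. deriv ar E {} (\<kappa> g) (subst
      (case_sum (\<lambda>a. subst \<rho> (free_rep ar E S a)) (\<lambda>b. subst \<rho>' (free_rep ar E S' b))) (\<pi> g))"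
  shows "deriv ar E {} (subst \<kappa> t) (App z [])"
proof -
  let ?\<theta> =
    "case_sum (\<lambda>a. subst \<rho> (free_rep ar E S a)) (\<lambda>b. subst \<rho>' (free_rep ar E S' b))"
  have "deriv ar E {} (subst \<kappa> t) (subst (\<lambda>g. subst ?\<theta> (\<pi> g)) t)"
    by (intro deriv_subst_cong[OF wf] ballI pointwise)
  moreover have "deriv ar E {} (subst ?\<theta> (subst \<pi> t)) (App z [])"
    using deriv_free_presentation[OF kernel assms(3,4)] by simp
  ultimately show ?thesis
    unfolding subst_subst by (rule deriv.trans)
qed

lemma commutator_term_lift:
  fixes ar :: "'f \<Rightarrow> nat" and e :: "'s \<Rightarrow> nat"
  assumes pointed: "pointed_variety ar E z" and wf: "wf_trm ar t"
    and kernel_X: "deriv ar E (rel_AX ar (free_ops ar E) (free_carrier ar E S) (free_carrier ar E P))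
      (subst (map_AX0 z) t) (App z [])"
    and kernel_Y: "deriv ar E (rel_AX ar (free_ops ar E) (free_carrier ar E S) (free_carrier ar E Q))
      (subst (map_A0Y z) t) (App z [])"
  shows "commutator_term ar E z (subst (lift_gen ar E S P Q e) t)"
proof -
  let ?\<tau> = "lift_gen ar E S P Q e"
  have "deriv ar E {} (subst (\<lambda>v. kill_y v z) (subst ?\<tau> t)) (App z [])"
    unfolding subst_subst
  proof (rule deriv_zero_of_free_kernel[OF kernel_X wf,
        where \<rho> = "\<lambda>s. Var (Inl (e s))" and \<rho>' = "\<lambda>s. Var (Inr (Inl (e s)))"])
    fix g
    show "deriv ar E {} (subst (\<lambda>v. kill_y v z) (?\<tau> g))
      (subst (case_sum (\<lambda>a. subst (\<lambda>s. Var (Inl (e s))) (free_rep ar E S a))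
        (\<lambda>x. subst (\<lambda>s. Var (Inr (Inl (e s)))) (free_rep ar E P x))) (map_AX0 z g))"
    proof (cases g rule: sum3_cases)
      case (Y y)
      then show ?thesis
        using deriv_subst_zero[OF pointed wf_free_rep]
        by (simp add: lift_gen_def subst_subst kill_y_def map_AX0_def)
    qed (simp_all add: lift_gen_def subst_subst kill_y_def map_AX0_def fold3_def
        deriv.refl wf_subst wf_free_rep)
  qed simp_all
  moreover have "deriv ar E {} (subst (\<lambda>v. kill_x v z) (subst ?\<tau> t)) (App z [])"
    unfolding subst_subst
  proof (rule deriv_zero_of_free_kernel[OF kernel_Y wf,
        where \<rho> = "\<lambda>s. Var (Inl (e s))" and \<rho>' = "\<lambda>s. Var (Inr (Inr (e s)))"])
    fix g
    show "deriv ar E {} (subst (\<lambda>v. kill_x v z) (?\<tau> g))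
      (subst (case_sum (\<lambda>a. subst (\<lambda>s. Var (Inl (e s))) (free_rep ar E S a))
        (\<lambda>y. subst (\<lambda>s. Var (Inr (Inr (e s)))) (free_rep ar E Q y))) (map_A0Y z g))"
    proof (cases g rule: sum3_cases)
      case (X x)
      then show ?thesis
        using deriv_subst_zero[OF pointed wf_free_rep]
        by (simp add: lift_gen_def subst_subst kill_x_def map_A0Y_def)
    qed (simp_all add: lift_gen_def subst_subst kill_x_def map_A0Y_def fold3_def
        deriv.refl wf_subst wf_free_rep)
  qed simp_all
  moreover have "wf_trm ar (subst ?\<tau> t)"
    using wf by (simp add: wf_subst wf_lift_gen)
  ultimately show ?thesis
    unfolding commutator_term_def by blast
qed

lemma eval_lift_gen:
  assumes valid:
      "\<forall>g\<in>vars t. valid_gen3 (free_carrier ar E S) (free_carrier ar E P) (free_carrier ar E Q) g"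
    and gens: "\<forall>g\<in>vars t. \<forall>s\<in>vars (free_rep ar E (sel3 g S P Q) (fold3 g)).
      \<alpha> (retag g (e s)) = free_gen ar E s"
  shows "eval (free_ops ar E) \<alpha> (subst (lift_gen ar E S P Q e) t) = eval (free_ops ar E) fold3 t"
  unfolding eval_subst
proof (rule eval_cong, intro ballI)
  fix g assume g: "g \<in> vars t"
  have "eval (free_ops ar E) \<alpha> (lift_gen ar E S P Q e g)
      = eval (free_ops ar E) (\<lambda>s. \<alpha> (retag g (e s))) (free_rep ar E (sel3 g S P Q) (fold3 g))"
    by (simp add: lift_gen_def eval_subst)
  also have "\<dots> = tcls ar E (free_rep ar E (sel3 g S P Q) (fold3 g))"
    using gens g by (intro eval_free_ops wf_free_rep) blast
  also have "\<dots> = fold3 g"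
    using valid g by (simp add: valid_gen3_free free_rep_in_carrier)
  finally show "eval (free_ops ar E) \<alpha> (lift_gen ar E S P Q e g) = fold3 g" .
qed

lemma comm_A1_subset_comm_CA_free:
  fixes ar :: "'f \<Rightarrow> nat" and S P Q :: "'s set"
  assumes pointed: "pointed_variety ar E z"
  defines "A \<equiv> free_carrier ar E S" and "X \<equiv> free_carrier ar E P" and "Y \<equiv> free_carrier ar E Q"
  shows "comm_A1 ar E z A (free_ops ar E) X Y \<subseteq> comm_CA ar E z A (free_ops ar E) X Y"
proof
  fix c assume "c \<in> comm_A1 ar E z A (free_ops ar E) X Y"
  then obtain t where c: "c = eval (free_ops ar E) fold3 t" and wf: "wf_trm ar t"
    and valid: "\<forall>g\<in>vars t. valid_gen3 A X Y g"
    and kernel_X: "deriv ar E (rel_AX ar (free_ops ar E) A X) (subst (map_AX0 z) t) (App z [])"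
    and kernel_Y: "deriv ar E (rel_AX ar (free_ops ar E) A Y) (subst (map_A0Y z) t) (App z [])"
    unfolding comm_A1_def by blast
  define V where "V = (\<Union>g\<in>vars t. vars (free_rep ar E (sel3 g S P Q) (fold3 g)))"
  obtain e :: "'s \<Rightarrow> nat" where e: "inj_on e V"
    using finite_imp_inj_to_nat_seg[of V] unfolding V_def by (auto simp: finite_vars)
  \<comment> \<open>\<alpha> undoes the renaming e on the variables that occur; elsewhere it is just some
    element of the right subalgebra.\<close>
  define \<alpha> :: "var3 \<Rightarrow> ('f, 's) trm set" where
    "\<alpha> v = (let s = inv_into V e (fold3 v) in
      if s \<in> sel3 v S P Q then free_gen ar E s else tcls ar E (App z []))" for v
  have \<alpha>_mem: "\<alpha> v \<in> free_carrier ar E (sel3 v S P Q)" for v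
    using pointed by (simp add: \<alpha>_def Let_def pointed_variety_def free_gen_in_free_carrier
        const_in_free_carrier)
  have \<alpha>_range: "\<forall>i. \<alpha> (Inl i) \<in> A \<and> \<alpha> (Inr (Inl i)) \<in> X \<and> \<alpha> (Inr (Inr i)) \<in> Y"
    using \<alpha>_mem[of "Inl _"] \<alpha>_mem[of "Inr (Inl _)"] \<alpha>_mem[of "Inr (Inr _)"]
    by (simp add: A_def X_def Y_def)
  have "\<alpha> (retag g (e s)) = free_gen ar E s"
    if "g \<in> vars t" "s \<in> vars (free_rep ar E (sel3 g S P Q) (fold3 g))" for g s
  proof -
    have "s \<in> V" using that unfolding V_def by blast
    moreover have "s \<in> sel3 g S P Q"
      using that valid
      by (auto simp: A_def X_def Y_def valid_gen3_free dest!: free_rep_in_carrier)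
    ultimately show ?thesis using e by (simp add: \<alpha>_def)
  qed
  then have "eval (free_ops ar E) \<alpha> (subst (lift_gen ar E S P Q e) t) = c"
    using valid c by (simp add: eval_lift_gen A_def X_def Y_def)
  moreover have "commutator_term ar E z (subst (lift_gen ar E S P Q e) t)"
    using commutator_term_lift[OF pointed wf] kernel_X kernel_Y by (simp add: A_def X_def Y_def)
  ultimately show "c \<in> comm_CA ar E z A (free_ops ar E) X Y"
    unfolding comm_CA_def using \<alpha>_range by blast
qed

theorem proposition7p5:
  fixes ar :: "'f \<Rightarrow> nat"
    and E :: "(('f, nat) trm \<times> ('f, nat) trm) set"
    and z :: 'f
  assumes pointed: "pointed_variety ar E z"
  shows
    "(\<forall>(C :: 'a set) F X Y.
        in_variety ar E C F \<and> subalgebra ar F C X \<and> subalgebra ar F C Y \<longrightarrow>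
        comm_CA ar E z C F X Y \<subseteq> comm_A1 ar E z C F X Y)
   \<and> (\<forall>(S :: 's set) P Q.
        P \<subseteq> S \<and> Q \<subseteq> S \<and> P \<inter> Q = {} \<longrightarrow>
        (let A = free_carrier ar E S; F = free_ops ar E;
             X = generated ar F A (free_gen ar E ` P);
             Y = generated ar F A (free_gen ar E ` Q)
         in comm_CA ar E z A F X Y = comm_A1 ar E z A F X Y))"
proof (intro conjI allI impI)
  fix C :: "'a set" and F X Y
  show "comm_CA ar E z C F X Y \<subseteq> comm_A1 ar E z C F X Y"
    using pointed by (rule comm_CA_subset_comm_A1)
next
  fix S P Q :: "'s set"
  assume "P \<subseteq> S \<and> Q \<subseteq> S \<and> P \<inter> Q = {}"
  then have "generated ar (free_ops ar E) (free_carrier ar E S) (free_gen ar E ` P) =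
      free_carrier ar E P"
    and "generated ar (free_ops ar E) (free_carrier ar E S) (free_gen ar E ` Q) =
      free_carrier ar E Q"
    by (simp_all add: generated_free_gen)
  then show "let A = free_carrier ar E S; F = free_ops ar E;
             X = generated ar F A (free_gen ar E ` P);
             Y = generated ar F A (free_gen ar E ` Q)
         in comm_CA ar E z A F X Y = comm_A1 ar E z A F X Y"
    unfolding Let_def
    using comm_CA_subset_comm_A1[OF pointed] comm_A1_subset_comm_CA_free[OF pointed]
    by (simp only:) (rule equalityI)
qed

end
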